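(* For every integer $p \ge 1$ there exist an integer $k$ and a $k$-colourable $(4K_1, C_4, \text{claw})$-free graph $G$ that is not $(k+p)$-mixing.
   Context: All graphs are finite and simple. A $k$-colouring of $G$ is a map $\alpha: V(G)\to\{1,\dots,k\}$ with $\alpha(u)\neq\alpha(v)$ for every edge $uv$; $G$ is $k$-colourable if one exists. The reconfiguration graph $\mathcal{R}_k(G)$ has the $k$-colourings of $G$ as vertices, two being adjacent if they differ on exactly one vertex; $G$ is $k$-mixing if $\mathcal{R}_k(G)$ is connected. A graph is $\mathcal{H}$-free for a set $\mathcal{H}$ of graphs if it contains no induced subgraph isomorphic to any member of $\mathcal{H}$. $4K_1$ is the edgeless graph on 4 vertices, $C_4$ the 4-cycle, and the claw is $K_{1,3}$. *)

theory Defs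
  imports Main
begin

definition simple_graph :: "'a set \<Rightarrow> ('a \<Rightarrow> 'a \<Rightarrow> bool) \<Rightarrow> bool" where
  "simple_graph V E \<longleftrightarrow> finite V \<and> (\<forall>u v. E u v \<longrightarrow> u \<in> V \<and> v \<in> V)
     \<and> (\<forall>u v. E u v \<longrightarrow> E v u) \<and> (\<forall>v. \<not> E v v)"

text \<open>A k-colouring: a map V -> {1..k} with distinct colours on adjacent vertices.
  To make colourings canonical objects (maps defined on V only), values outside V are fixed to 0.\<close>
definition colouring :: "nat \<Rightarrow> 'a set \<Rightarrow> ('a \<Rightarrow> 'a \<Rightarrow> bool) \<Rightarrow> ('a \<Rightarrow> nat) \<Rightarrow> bool" where
  "colouring k V E \<alpha> \<longleftrightarrow> (\<forall>v\<in>V. \<alpha> v \<in> {1..k}) \<and> (\<forall>v. v \<notin> V \<longrightarrow> \<alpha> v = 0)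
     \<and> (\<forall>u v. E u v \<longrightarrow> \<alpha> u \<noteq> \<alpha> v)"

definition colourable :: "nat \<Rightarrow> 'a set \<Rightarrow> ('a \<Rightarrow> 'a \<Rightarrow> bool) \<Rightarrow> bool" where
  "colourable k V E \<longleftrightarrow> (\<exists>\<alpha>. colouring k V E \<alpha>)"

definition recol_adj :: "nat \<Rightarrow> 'a set \<Rightarrow> ('a \<Rightarrow> 'a \<Rightarrow> bool) \<Rightarrow> ('a \<Rightarrow> nat) \<Rightarrow> ('a \<Rightarrow> nat) \<Rightarrow> bool" where
  "recol_adj k V E \<alpha> \<beta> \<longleftrightarrow> colouring k V E \<alpha> \<and> colouring k V E \<beta> \<and> card {v\<in>V. \<alpha> v \<noteq> \<beta> v} = 1"

definition mixing :: "nat \<Rightarrow> 'a set \<Rightarrow> ('a \<Rightarrow> 'a \<Rightarrow> bool) \<Rightarrow> bool" where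
  "mixing k V E \<longleftrightarrow> (\<forall>\<alpha> \<beta>. colouring k V E \<alpha> \<longrightarrow> colouring k V E \<beta> \<longrightarrow> (recol_adj k V E)\<^sup>*\<^sup>* \<alpha> \<beta>)"

definition induced_sub :: "'b set \<Rightarrow> ('b \<Rightarrow> 'b \<Rightarrow> bool) \<Rightarrow> 'a set \<Rightarrow> ('a \<Rightarrow> 'a \<Rightarrow> bool) \<Rightarrow> bool" where
  "induced_sub W F V E \<longleftrightarrow> (\<exists>f. inj_on f W \<and> f ` W \<subseteq> V \<and> (\<forall>x\<in>W. \<forall>y\<in>W. E (f x) (f y) \<longleftrightarrow> F x y))"

definition fourK1 :: "nat \<Rightarrow> nat \<Rightarrow> bool" where
  "fourK1 x y \<longleftrightarrow> False"

definition C4 :: "nat \<Rightarrow> nat \<Rightarrow> bool" where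
  "C4 x y \<longleftrightarrow> x < 4 \<and> y < 4 \<and> (y = (x + 1) mod 4 \<or> x = (y + 1) mod 4)"

definition claw :: "nat \<Rightarrow> nat \<Rightarrow> bool" where
  "claw x y \<longleftrightarrow> x < 4 \<and> y < 4 \<and> x \<noteq> y \<and> (x = 0 \<or> y = 0)"

definition fourK1_C4_claw_free :: "'a set \<Rightarrow> ('a \<Rightarrow> 'a \<Rightarrow> bool) \<Rightarrow> bool" where
  "fourK1_C4_claw_free V E \<longleftrightarrow> \<not> induced_sub {0..<4::nat} fourK1 V E
     \<and> \<not> induced_sub {0..<4::nat} C4 V E \<and> \<not> induced_sub {0..<4::nat} claw V E"

end

theory Submission
  imports Defs
begin

text \<open>Blow up every vertex of the 6-cycle into a clique of size t. Two vertices in the same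
  bag are adjacent twins, so an induced 4K1, C4 or claw would project to one on the six bags
  (with equal bags counting as adjacent), and a finite check rules this out. Bags of equal parity
  are pairwise non-adjacent and can share t colours, so 2t colours suffice. Letting instead the
  opposite bags i and i + 3 share t colours uses 3t colours, and then every vertex sees all other
  colours, since the three consecutive bags around it cover all residues mod 3. This colouring is
  frozen, an isolated vertex of the reconfiguration graph, so the blow-up is not 3t-mixing.\<close>

definition frozen :: "nat \<Rightarrow> 'a set \<Rightarrow> ('a \<Rightarrow> 'a \<Rightarrow> bool) \<Rightarrow> ('a \<Rightarrow> nat) \<Rightarrow> bool" where
  "frozen k V E \<alpha> \<longleftrightarrow> (\<forall>w\<in>V. \<forall>c\<in>{1..k}. c \<noteq> \<alpha> w \<longrightarrow> (\<exists>u. E w u \<and> \<alpha> u = c))"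

lemma colouring_mono: "colouring k V E \<alpha> \<Longrightarrow> k \<le> m \<Longrightarrow> colouring m V E \<alpha>"
  unfolding colouring_def by fastforce

lemma frozen_not_recol_adj:
  assumes "frozen k V E \<alpha>"
  shows "\<not> recol_adj k V E \<alpha> \<beta>"
proof
  assume "recol_adj k V E \<alpha> \<beta>"
  then have \<alpha>: "colouring k V E \<alpha>" and \<beta>: "colouring k V E \<beta>"
    and card: "card {v\<in>V. \<alpha> v \<noteq> \<beta> v} = 1"
    unfolding recol_adj_def by auto
  from card obtain w where diff: "{v\<in>V. \<alpha> v \<noteq> \<beta> v} = {w}"
    by (rule card_1_singletonE)
  then have "w \<in> V" and "\<beta> w \<noteq> \<alpha> w" by auto
  moreover have "\<beta> w \<in> {1..k}" using \<beta> \<open>w \<in> V\<close> unfolding colouring_def by blast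
  ultimately have "\<exists>u. E w u \<and> \<alpha> u = \<beta> w"
    using assms \<open>w \<in> V\<close> unfolding frozen_def by blast
  then obtain u where "E w u" and u: "\<alpha> u = \<beta> w" by blast
  have "\<alpha> u \<noteq> 0" using u \<open>\<beta> w \<in> {1..k}\<close> by auto
  then have "u \<in> V" using \<alpha> unfolding colouring_def by metis
  moreover have "u \<notin> {v\<in>V. \<alpha> v \<noteq> \<beta> v}"
    using diff u \<open>\<beta> w \<noteq> \<alpha> w\<close> by auto
  ultimately have "\<beta> u = \<alpha> u" by simp
  moreover have "\<beta> u \<noteq> \<beta> w" using \<beta> \<open>E w u\<close> unfolding colouring_def by metis
  ultimately show False using u by simp
qed

lemma frozen_not_mixing:
  assumes "frozen k V E \<alpha>" "colouring k V E \<alpha>" "colouring k V E \<beta>" "\<alpha> \<noteq> \<beta>"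
  shows "\<not> mixing k V E"
proof
  assume "mixing k V E"
  then have "(recol_adj k V E)\<^sup>*\<^sup>* \<alpha> \<beta>" using assms(2,3) unfolding mixing_def by blast
  then show False
  proof (cases rule: converse_rtranclpE)
    case base
    with assms(4) show False by simp
  next
    case (step \<gamma>)
    with frozen_not_recol_adj[OF assms(1)] show False by blast
  qed
qed

definition C6_closed_adj :: "nat \<Rightarrow> nat \<Rightarrow> bool" where
  "C6_closed_adj a b \<longleftrightarrow> a = b \<or> a = b + 1 \<or> b = a + 1 \<or> (a = 0 \<and> b = 5) \<or> (a = 5 \<and> b = 0)"

lemma less_6_cases: "a < (6::nat) \<Longrightarrow> a = 0 \<or> a = 1 \<or> a = 2 \<or> a = 3 \<or> a = 4 \<or> a = 5"
  by arith

lemma C6_closed_adj_no_independent_4: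
  "\<lbrakk>a < 6; b < 6; c < 6; d < 6; \<not> C6_closed_adj a b; \<not> C6_closed_adj a c; \<not> C6_closed_adj a d;
    \<not> C6_closed_adj b c; \<not> C6_closed_adj b d; \<not> C6_closed_adj c d\<rbrakk> \<Longrightarrow> False"
  by (drule less_6_cases)+ (elim disjE; simp add: C6_closed_adj_def)

lemma C6_closed_adj_no_induced_C4:
  "\<lbrakk>a < 6; b < 6; c < 6; d < 6; C6_closed_adj a b; C6_closed_adj b c; C6_closed_adj c d;
    C6_closed_adj a d; \<not> C6_closed_adj a c; \<not> C6_closed_adj b d\<rbrakk> \<Longrightarrow> False"
  by (drule less_6_cases)+ (elim disjE; simp add: C6_closed_adj_def)

lemma C6_closed_adj_no_induced_claw:
  "\<lbrakk>a < 6; b < 6; c < 6; d < 6; C6_closed_adj a b; C6_closed_adj a c; C6_closed_adj a d;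
    \<not> C6_closed_adj b c; \<not> C6_closed_adj b d; \<not> C6_closed_adj c d\<rbrakk> \<Longrightarrow> False"
  by (drule less_6_cases)+ (elim disjE; simp add: C6_closed_adj_def)

lemma C6_closed_adj_mod_2_neq:
  "\<lbrakk>a < 6; b < 6; C6_closed_adj a b; a \<noteq> b\<rbrakk> \<Longrightarrow> a mod 2 \<noteq> b mod 2"
  by (drule less_6_cases)+ (elim disjE; simp add: C6_closed_adj_def)

lemma C6_closed_adj_mod_3_neq:
  "\<lbrakk>a < 6; b < 6; C6_closed_adj a b; a \<noteq> b\<rbrakk> \<Longrightarrow> a mod 3 \<noteq> b mod 3"
  by (drule less_6_cases)+ (elim disjE; simp add: C6_closed_adj_def)

lemma ex_less_6: "(\<exists>b<6::nat. P b) \<longleftrightarrow> P 0 \<or> P 1 \<or> P 2 \<or> P 3 \<or> P 4 \<or> P 5"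
  by (auto dest: less_6_cases; force)

lemma C6_closed_adj_meets_all_mod_3:
  "a < 6 \<Longrightarrow> r < 3 \<Longrightarrow> \<exists>b<6. C6_closed_adj a b \<and> b mod 3 = r"
  by (drule less_6_cases, elim disjE; simp add: ex_less_6 C6_closed_adj_def; arith)

text \<open>Vertex v lies in bag v mod 6 at level v div 6.\<close>
definition C6_blowup :: "nat \<Rightarrow> nat \<Rightarrow> nat \<Rightarrow> bool" where
  "C6_blowup t u v \<longleftrightarrow> u \<noteq> v \<and> u < 6 * t \<and> v < 6 * t \<and> C6_closed_adj (u mod 6) (v mod 6)"

lemma simple_graph_C6_blowup: "simple_graph {..<6*t} (C6_blowup t)"
  unfolding simple_graph_def C6_blowup_def C6_closed_adj_def by auto

lemma C6_blowup_induced_sub_bags: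
  assumes "induced_sub {0..<4::nat} F {..<6*t} (C6_blowup t)"
  obtains a b c d where "a < 6" "b < 6" "c < 6" "d < 6"
    "C6_closed_adj a b \<longleftrightarrow> F 0 1" "C6_closed_adj a c \<longleftrightarrow> F 0 2" "C6_closed_adj a d \<longleftrightarrow> F 0 3"
    "C6_closed_adj b c \<longleftrightarrow> F 1 2" "C6_closed_adj b d \<longleftrightarrow> F 1 3" "C6_closed_adj c d \<longleftrightarrow> F 2 3"
proof -
  from assms obtain f where inj: "inj_on f {0..<4}" and sub: "f ` {0..<4} \<subseteq> {..<6*t}"
    and iff: "\<forall>i\<in>{0..<4}. \<forall>j\<in>{0..<4}. C6_blowup t (f i) (f j) \<longleftrightarrow> F i j"
    unfolding induced_sub_def by blast
  have bags: "C6_closed_adj (f i mod 6) (f j mod 6) \<longleftrightarrow> F i j" if "i < 4" "j < 4" "i \<noteq> j" for i j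
  proof -
    have "f i \<noteq> f j" using inj_onD[OF inj, of i j] that by auto
    moreover have "f i < 6*t" "f j < 6*t" using sub that by (auto simp: image_subset_iff)
    moreover have "C6_blowup t (f i) (f j) \<longleftrightarrow> F i j" using iff that by simp
    ultimately show ?thesis unfolding C6_blowup_def by simp
  qed
  show thesis
    by (rule that[of "f 0 mod 6" "f 1 mod 6" "f 2 mod 6" "f 3 mod 6"]) (simp_all add: bags)
qed

lemma C6_blowup_fourK1_C4_claw_free: "fourK1_C4_claw_free {..<6*t} (C6_blowup t)"
  unfolding fourK1_C4_claw_free_def
proof (intro conjI notI)
  assume "induced_sub {0..<4::nat} fourK1 {..<6*t} (C6_blowup t)"
  then show False
    by (rule C6_blowup_induced_sub_bags) (simp add: fourK1_def, meson C6_closed_adj_no_independent_4)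
next
  assume "induced_sub {0..<4::nat} C4 {..<6*t} (C6_blowup t)"
  then show False
    by (rule C6_blowup_induced_sub_bags) (simp add: C4_def, meson C6_closed_adj_no_induced_C4)
next
  assume "induced_sub {0..<4::nat} claw {..<6*t} (C6_blowup t)"
  then show False
    by (rule C6_blowup_induced_sub_bags) (simp add: claw_def, meson C6_closed_adj_no_induced_claw)
qed

lemma mult_add_less_mult: "(j::nat) < t \<Longrightarrow> r < m \<Longrightarrow> m * j + r < m * t"
proof -
  assume "j < t" "r < m"
  then have "m * j + r < m * Suc j" by simp
  also have "\<dots> \<le> m * t" using \<open>j < t\<close> by (intro mult_le_mono2) simp
  finally show ?thesis .
qed

lemma mult_add_inj:
  assumes "(r::nat) < m" "s < m" "m * i + r = m * j + s"
  shows "i = j" "r = s"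
proof -
  have "r = (m * i + r) mod m" "s = (m * j + s) mod m" using assms(1,2) by simp_all
  with assms(3) show "r = s" by simp
  have "i = (m * i + r) div m" "j = (m * j + s) div m" using assms(1,2) by simp_all
  with assms(3) show "i = j" by simp
qed

definition layered_colouring :: "nat \<Rightarrow> (nat \<Rightarrow> nat) \<Rightarrow> nat \<Rightarrow> nat \<Rightarrow> nat" where
  "layered_colouring m \<phi> t v = (if v < 6 * t then m * (v div 6) + \<phi> (v mod 6) + 1 else 0)"

lemma layered_colouring_colouring:
  assumes range: "\<And>a. a < 6 \<Longrightarrow> \<phi> a < m"
    and proper: "\<And>a b. a < 6 \<Longrightarrow> b < 6 \<Longrightarrow> C6_closed_adj a b \<Longrightarrow> a \<noteq> b \<Longrightarrow> \<phi> a \<noteq> \<phi> b"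
  shows "colouring (m * t) {..<6*t} (C6_blowup t) (layered_colouring m \<phi> t)"
  unfolding colouring_def
proof (intro conjI allI impI ballI)
  fix v assume "v \<in> {..<6*t}"
  then have "v div 6 < t" "\<phi> (v mod 6) < m" using range by auto
  then have "m * (v div 6) + \<phi> (v mod 6) < m * t" by (rule mult_add_less_mult)
  then show "layered_colouring m \<phi> t v \<in> {1..m * t}"
    using \<open>v \<in> {..<6*t}\<close> unfolding layered_colouring_def by auto
next
  fix v :: nat assume "v \<notin> {..<6*t}"
  then show "layered_colouring m \<phi> t v = 0" by (simp add: layered_colouring_def)
next
  fix u v assume uv: "C6_blowup t u v"
  show "layered_colouring m \<phi> t u \<noteq> layered_colouring m \<phi> t v"
  proof
    assume "layered_colouring m \<phi> t u = layered_colouring m \<phi> t v"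
    with uv have "m * (u div 6) + \<phi> (u mod 6) = m * (v div 6) + \<phi> (v mod 6)"
      unfolding C6_blowup_def layered_colouring_def by simp
    moreover have "\<phi> (u mod 6) < m" "\<phi> (v mod 6) < m" using range by auto
    ultimately have "u div 6 = v div 6" "\<phi> (u mod 6) = \<phi> (v mod 6)"
      using mult_add_inj by blast+
    with uv proper[of "u mod 6" "v mod 6"] have "u mod 6 = v mod 6"
      unfolding C6_blowup_def by auto
    with \<open>u div 6 = v div 6\<close> uv show False
      unfolding C6_blowup_def by (metis div_mult_mod_eq)
  qed
qed

lemma layered_colouring_frozen:
  assumes all_seen: "\<And>a r. a < 6 \<Longrightarrow> r < m \<Longrightarrow> \<exists>b<6. C6_closed_adj a b \<and> \<phi> b = r"
  shows "frozen (m * t) {..<6*t} (C6_blowup t) (layered_colouring m \<phi> t)"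
  unfolding frozen_def
proof (intro ballI impI)
  fix w c assume w: "w \<in> {..<6*t}" and c: "c \<in> {1..m * t}"
    and new: "c \<noteq> layered_colouring m \<phi> t w"
  define j where "j = (c - 1) div m"
  define r where "r = (c - 1) mod m"
  have "m > 0" using c by (cases m) auto
  then have "r < m" "c = m * j + r + 1" using c unfolding j_def r_def by auto
  have "c - 1 < m * t" using c by auto
  then have "j < t" using \<open>m > 0\<close> unfolding j_def
    by (simp add: div_less_iff_less_mult mult.commute)
  obtain b where "b < 6" "C6_closed_adj (w mod 6) b" "\<phi> b = r"
    using all_seen[of "w mod 6" r] \<open>r < m\<close> by auto
  define u where "u = 6 * j + b"
  have "u < 6 * t" using mult_add_less_mult[OF \<open>j < t\<close> \<open>b < 6\<close>] unfolding u_def .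
  moreover have "u div 6 = j" "u mod 6 = b" using \<open>b < 6\<close> unfolding u_def by auto
  ultimately have colour_u: "layered_colouring m \<phi> t u = c"
    using \<open>\<phi> b = r\<close> \<open>c = m * j + r + 1\<close> unfolding layered_colouring_def by simp
  with new have "u \<noteq> w" by auto
  with w \<open>u < 6 * t\<close> \<open>u mod 6 = b\<close> \<open>C6_closed_adj (w mod 6) b\<close> have "C6_blowup t w u"
    unfolding C6_blowup_def by auto
  with colour_u show "\<exists>u. C6_blowup t w u \<and> layered_colouring m \<phi> t u = c" by blast
qed

theorem theorem4:
  fixes p :: nat
  assumes "p \<ge> 1"
  shows "\<exists>(k::nat) (V::nat set) E. simple_graph V E \<and> fourK1_C4_claw_free V E
           \<and> colourable k V E \<and> \<not> mixing (k + p) V E"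
proof (intro exI conjI)
  let ?parity = "layered_colouring 2 (\<lambda>a. a mod 2) p"
  let ?opposite = "layered_colouring 3 (\<lambda>a. a mod 3) p"
  have parity: "colouring (2 * p) {..<6*p} (C6_blowup p) ?parity"
    by (rule layered_colouring_colouring) (simp_all add: C6_closed_adj_mod_2_neq)
  have opposite: "colouring (3 * p) {..<6*p} (C6_blowup p) ?opposite"
    by (rule layered_colouring_colouring) (simp_all add: C6_closed_adj_mod_3_neq)
  have "frozen (3 * p) {..<6*p} (C6_blowup p) ?opposite"
    by (rule layered_colouring_frozen) (rule C6_closed_adj_meets_all_mod_3)
  moreover have "?opposite \<noteq> ?parity"
  proof
    assume "?opposite = ?parity"
    then have "?opposite 2 = ?parity 2" by simp
    with assms show False by (simp add: layered_colouring_def)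
  qed
  moreover have "colouring (3 * p) {..<6*p} (C6_blowup p) ?parity"
    using colouring_mono[OF parity] by simp
  ultimately have "\<not> mixing (3 * p) {..<6*p} (C6_blowup p)"
    using frozen_not_mixing opposite by blast
  then show "\<not> mixing (2 * p + p) {..<6*p} (C6_blowup p)"
    by (simp add: add_mult_distrib)
  show "colourable (2 * p) {..<6*p} (C6_blowup p)"
    using parity unfolding colourable_def by blast
  show "simple_graph {..<6*p} (C6_blowup p)" by (rule simple_graph_C6_blowup)
  show "fourK1_C4_claw_free {..<6*p} (C6_blowup p)" by (rule C6_blowup_fourK1_C4_claw_free)
qed

end
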